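(* Let $v=(v_{ij})$ be a complex $2\times2$ matrix with $\|v\|=1$ (i.e. $v\in\partial\mathcal R_I$). If $\pi(v)\in\partial\mathbb E$, then $|v_{12}|=|v_{21}|$.
   Context: $\|\cdot\|$ is the operator norm on $2\times2$ complex matrices, $\mathcal R_I=\{x:\|x\|<1\}$, $\pi(x)=(x_{11},x_{22},\det x)$, and the tetrablock is $\mathbb E=\pi(\mathcal R_I)=\{z\in\mathbb C^3:\ |z_2-\bar z_1z_3|+|z_1z_2-z_3|+|z_1|^2<1\}$. *)

theory Defs
  imports "HOL-Analysis.Analysis"
begin

definition opnorm :: "complex^2^2 \<Rightarrow> real" where
  "opnorm v = onorm (\<lambda>x::complex^2. v *v x)"

definition R_I :: "(complex^2^2) set" where
  "R_I = {x. opnorm x < 1}"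

definition tb_pi :: "complex^2^2 \<Rightarrow> complex \<times> complex \<times> complex" where
  "tb_pi x = (x $ 1 $ 1, x $ 2 $ 2, det x)"

definition tetrablock :: "(complex \<times> complex \<times> complex) set" where
  "tetrablock = tb_pi ` R_I"

end

theory Submission
  imports Defs
begin

text \<open>
  A 2x2 matrix v with squared Hilbert-Schmidt norm S satisfies \<open>\<parallel>v\<parallel>\<^sup>2 \<le> K\<close> exactly when
  \<open>S \<le> 2K\<close> and \<open>K\<^sup>2 - K S + |det v|\<^sup>2 \<ge> 0\<close>: the matrix \<open>K - v\<^sup>* v\<close> must be positive semidefinite.
  So if \<open>\<parallel>v\<parallel> = 1\<close> and \<open>|v\<^sub>1\<^sub>2| \<noteq> |v\<^sub>2\<^sub>1|\<close>, replacing both off-diagonal entries by a square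
  root of \<open>v\<^sub>1\<^sub>2 v\<^sub>2\<^sub>1\<close> keeps \<open>\<pi>(v)\<close> but strictly lowers S (AM-GM), giving a strict
  contraction. The same symmetric lift works continuously near \<open>\<pi>(v)\<close>, so \<open>\<pi>(v)\<close> is an
  interior point of the tetrablock.
\<close>

definition hs_norm_sq :: "complex^2^2 \<Rightarrow> real" where
  "hs_norm_sq v = (\<Sum>i\<in>UNIV. \<Sum>j\<in>UNIV. cmod (v $ i $ j)^2)"

lemma hs_norm_sq_2:
  "hs_norm_sq v = cmod (v$1$1)^2 + cmod (v$1$2)^2 + cmod (v$2$1)^2 + cmod (v$2$2)^2"
  by (simp add: hs_norm_sq_def sum_2)

lemma norm_vec2_sq: "norm (x::complex^2)^2 = cmod (x$1)^2 + cmod (x$2)^2"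
  by (simp add: norm_vec_def L2_set_def sum_2)

lemma matrix_vector_mult_2:
  fixes v :: "complex^2^2"
  shows "(v *v x) $ 1 = v$1$1 * x$1 + v$1$2 * x$2" "(v *v x) $ 2 = v$2$1 * x$1 + v$2$2 * x$2"
  by (simp_all add: matrix_vector_mult_def sum_2)

lemma cmod_lincomb_sq_sum:
  fixes a b c d x1 x2 :: complex
  shows "cmod (a*x1 + b*x2)^2 + cmod (c*x1 + d*x2)^2 =
    (cmod a^2 + cmod c^2) * cmod x1^2 + (cmod b^2 + cmod d^2) * cmod x2^2
    + 2 * Re (cnj x1 * x2 * (cnj a * b + cnj c * d))"
  unfolding cmod_power2 by (simp add: algebra_simps power2_eq_square)

lemma gram_det_2:
  fixes a b c d :: complex
  shows "(cmod a^2 + cmod c^2) * (cmod b^2 + cmod d^2) - cmod (cnj a * b + cnj c * d)^2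
    = cmod (a*d - b*c)^2"
  unfolding cmod_power2 by (simp add: algebra_simps power2_eq_square)

lemma exists_unit_rotating_to_norm:
  fixes q :: complex
  obtains u where "cmod u = 1" "u * q = of_real (cmod q)"
proof (cases "q = 0")
  case True
  then show ?thesis by (intro that[of 1]) simp_all
next
  case False
  have "cnj q * q = of_real (cmod q ^ 2)"
    unfolding complex_norm_square by (rule mult.commute)
  then have "cnj q / of_real (cmod q) * q = of_real (cmod q ^ 2) / of_real (cmod q)"
    by (simp only: times_divide_eq_left)
  also have "\<dots> = of_real (cmod q)"
    using False by (simp add: power2_eq_square)
  finally have "cnj q / of_real (cmod q) * q = of_real (cmod q)" .
  moreover have "cmod (cnj q / of_real (cmod q)) = 1"
    using False by (simp add: norm_divide)
  ultimately show ?thesis by (intro that)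
qed

lemma binary_quadratic_form_nonneg_iff:
  fixes A C q :: real
  shows "(\<forall>m n. 0 \<le> A*m^2 + C*n^2 - 2*q*m*n) \<longleftrightarrow> 0 \<le> A + C \<and> q^2 \<le> A*C"
proof
  assume form: "\<forall>m n. 0 \<le> A*m^2 + C*n^2 - 2*q*m*n"
  have A: "0 \<le> A" and C: "0 \<le> C"
    using form[rule_format, of 1 0] form[rule_format, of 0 1] by simp_all
  have "q^2 \<le> A*C"
  proof (cases "A = 0")
    case True
    have "0 \<le> C*q^2 - 2*q*(C+1)*q" using form[rule_format, of "C+1" q] True by simp
    then have "q^2 * (C+2) \<le> 0" by (simp add: algebra_simps power2_eq_square)
    with C have "q = 0" by (simp add: mult_le_0_iff)
    then show ?thesis using A C by simp
  next
    case False
    have "0 \<le> A*(A*C - q^2)"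
      using form[rule_format, of q A] by (simp add: algebra_simps power2_eq_square)
    with False A show ?thesis by (simp add: zero_le_mult_iff)
  qed
  with A C show "0 \<le> A + C \<and> q^2 \<le> A*C" by simp
next
  assume trace_det: "0 \<le> A + C \<and> q^2 \<le> A*C"
  then have "0 \<le> A*C" using zero_le_power2 order_trans by blast
  with trace_det have A: "0 \<le> A" and C: "0 \<le> C"
    by (auto simp: zero_le_mult_iff)
  with trace_det have q: "\<bar>q\<bar> \<le> sqrt A * sqrt C"
    by (auto simp: real_sqrt_mult[symmetric] real_le_rsqrt)
  show "\<forall>m n. 0 \<le> A*m^2 + C*n^2 - 2*q*m*n"
  proof (intro allI)
    fix m n :: real
    have "2*q*m*n \<le> 2 * \<bar>q\<bar> * (\<bar>m\<bar> * \<bar>n\<bar>)"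
      by (simp add: abs_mult mult.assoc abs_le_iff flip: abs_mult)
    also have "\<dots> \<le> 2 * (sqrt A * sqrt C) * (\<bar>m\<bar> * \<bar>n\<bar>)"
      using q by (intro mult_right_mono) simp_all
    also have "\<dots> \<le> A*m^2 + C*n^2"
      using zero_le_power2[of "sqrt A * \<bar>m\<bar> - sqrt C * \<bar>n\<bar>"] A C
      by (simp add: algebra_simps power2_eq_square)
    finally show "0 \<le> A*m^2 + C*n^2 - 2*q*m*n" by simp
  qed
qed

text \<open>Rotating \<open>x\<^sub>2\<close> by a unit turns the cross term into \<open>2 |x\<^sub>1| |x\<^sub>2| |Q|\<close>, its worst case.\<close>

lemma hermitian_form_bound_iff:
  fixes P R K :: real and Q :: complex
  shows "(\<forall>x1 x2. P * cmod x1^2 + R * cmod x2^2 + 2 * Re (cnj x1 * x2 * Q) \<le> K * (cmod x1^2 + cmod x2^2))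
    \<longleftrightarrow> (\<forall>m n. 0 \<le> (K-P)*m^2 + (K-R)*n^2 - 2*cmod Q*m*n)"
proof
  assume bound: "\<forall>x1 x2. P * cmod x1^2 + R * cmod x2^2 + 2 * Re (cnj x1 * x2 * Q)
    \<le> K * (cmod x1^2 + cmod x2^2)"
  obtain u where u: "cmod u = 1" "u * Q = of_real (cmod Q)"
    by (rule exists_unit_rotating_to_norm)
  show "\<forall>m n. 0 \<le> (K-P)*m^2 + (K-R)*n^2 - 2*cmod Q*m*n"
  proof (intro allI)
    fix m n :: real
    have "Re (cnj (of_real m) * (of_real n * u) * Q) = m * n * cmod Q"
      by (simp add: mult.assoc u(2))
    moreover have "cmod (of_real n * u) = \<bar>n\<bar>" using u(1) by (simp add: norm_mult)
    ultimately show "0 \<le> (K-P)*m^2 + (K-R)*n^2 - 2*cmod Q*m*n"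
      using bound[rule_format, of "of_real m" "of_real n * u"] by (simp add: algebra_simps)
  qed
next
  assume form: "\<forall>m n. 0 \<le> (K-P)*m^2 + (K-R)*n^2 - 2*cmod Q*m*n"
  show "\<forall>x1 x2. P * cmod x1^2 + R * cmod x2^2 + 2 * Re (cnj x1 * x2 * Q)
    \<le> K * (cmod x1^2 + cmod x2^2)"
  proof (intro allI)
    fix x1 x2 :: complex
    have "Re (cnj x1 * x2 * Q) \<le> cmod x1 * cmod x2 * cmod Q"
      using complex_Re_le_cmod[of "cnj x1 * x2 * Q"] by (simp add: norm_mult)
    then show "P * cmod x1^2 + R * cmod x2^2 + 2 * Re (cnj x1 * x2 * Q) \<le> K * (cmod x1^2 + cmod x2^2)"
      using form[rule_format, of "cmod x1" "cmod x2"] by (simp add: algebra_simps)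
  qed
qed

lemma lincomb_bound_iff:
  fixes a b c d :: complex and K :: real
  defines "S \<equiv> cmod a^2 + cmod b^2 + cmod c^2 + cmod d^2"
  shows "(\<forall>x1 x2. cmod (a*x1 + b*x2)^2 + cmod (c*x1 + d*x2)^2 \<le> K * (cmod x1^2 + cmod x2^2))
    \<longleftrightarrow> S \<le> 2*K \<and> 0 \<le> K^2 - K*S + cmod (a*d - b*c)^2"
proof -
  define P where "P = cmod a^2 + cmod c^2"
  define R where "R = cmod b^2 + cmod d^2"
  define Q where "Q = cnj a * b + cnj c * d"
  have "P * R - cmod Q^2 = cmod (a*d - b*c)^2"
    unfolding P_def R_def Q_def by (rule gram_det_2)
  moreover have "S = P + R" by (simp add: S_def P_def R_def)
  ultimately have "(K-P)*(K-R) - cmod Q^2 = K^2 - K*S + cmod (a*d - b*c)^2"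
    by (simp add: algebra_simps power2_eq_square)
  then show ?thesis
    unfolding cmod_lincomb_sq_sum P_def[symmetric] R_def[symmetric] Q_def[symmetric]
      hermitian_form_bound_iff binary_quadratic_form_nonneg_iff \<open>S = P + R\<close>
    by auto
qed

lemma matrix_bound_2_iff:
  fixes v :: "complex^2^2" and K :: real
  shows "(\<forall>x. norm (v *v x)^2 \<le> K * norm x^2)
    \<longleftrightarrow> hs_norm_sq v \<le> 2*K \<and> 0 \<le> K^2 - K * hs_norm_sq v + cmod (det v)^2"
proof -
  have "(\<forall>x. norm (v *v x)^2 \<le> K * norm x^2) \<longleftrightarrow>
    (\<forall>x1 x2. cmod (v$1$1 * x1 + v$1$2 * x2)^2 + cmod (v$2$1 * x1 + v$2$2 * x2)^2
      \<le> K * (cmod x1^2 + cmod x2^2))"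
  proof (intro iffI allI)
    fix x1 x2
    assume that: "\<forall>x. norm (v *v x)^2 \<le> K * norm x^2"
    then show "cmod (v$1$1 * x1 + v$1$2 * x2)^2 + cmod (v$2$1 * x1 + v$2$2 * x2)^2
      \<le> K * (cmod x1^2 + cmod x2^2)"
      using that[rule_format, of "vector [x1, x2]"]
      by (simp add: norm_vec2_sq matrix_vector_mult_2)
  next
    fix x :: "complex^2"
    assume "\<forall>x1 x2. cmod (v$1$1 * x1 + v$1$2 * x2)^2 + cmod (v$2$1 * x1 + v$2$2 * x2)^2
      \<le> K * (cmod x1^2 + cmod x2^2)"
    then show "norm (v *v x)^2 \<le> K * norm x^2"
      by (simp add: norm_vec2_sq matrix_vector_mult_2)
  qed
  then show ?thesis
    by (simp add: lincomb_bound_iff hs_norm_sq_2 det_2)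
qed

lemma opnorm_le_sqrt_iff:
  fixes v :: "complex^2^2"
  assumes "0 \<le> K"
  shows "opnorm v \<le> sqrt K \<longleftrightarrow> (\<forall>x. norm (v *v x)^2 \<le> K * norm x^2)"
proof (intro iffI allI)
  fix x
  assume "opnorm v \<le> sqrt K"
  then have "norm (v *v x) \<le> sqrt K * norm x"
    using onorm[OF matrix_vector_mul_bounded_linear[of v], of x]
    by (simp add: opnorm_def order_trans mult_right_mono)
  then have "norm (v *v x)^2 \<le> (sqrt K * norm x)^2"
    by (simp add: power_mono)
  then show "norm (v *v x)^2 \<le> K * norm x^2"
    using assms by (simp add: power_mult_distrib)
next
  assume bound: "\<forall>x. norm (v *v x)^2 \<le> K * norm x^2"
  have "norm (v *v x) \<le> sqrt K * norm x" for x
    using real_sqrt_le_mono[OF bound[rule_format, of x]] by (simp add: real_sqrt_mult)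
  then show "opnorm v \<le> sqrt K"
    unfolding opnorm_def by (rule onorm_le)
qed

lemma opnorm_le_1_iff:
  "opnorm v \<le> 1 \<longleftrightarrow> hs_norm_sq v \<le> 2 \<and> 0 \<le> 1 - hs_norm_sq v + cmod (det v)^2"
  using opnorm_le_sqrt_iff[of 1 v] matrix_bound_2_iff[of v 1] by simp

lemma opnorm_lt_1I:
  assumes "hs_norm_sq v < 2" and "0 < 1 - hs_norm_sq v + cmod (det v)^2"
  shows "opnorm v < 1"
proof -
  define S where "S = hs_norm_sq v"
  define f where "f = 1 - S + cmod (det v)^2"
  define e where "e = min (f/2) ((2-S)/2)"
  have S0: "0 \<le> S" by (simp add: S_def hs_norm_sq_def sum_nonneg)
  have e_le: "e \<le> (2-S)/2" unfolding e_def by (rule min.cobounded2)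
  have e: "0 < e" "e \<le> 1" using assms S0 e_le by (auto simp: e_def S_def f_def)
  have "e \<le> f/2" unfolding e_def by (rule min.cobounded1)
  then have "e * (2-S) \<le> f/2 * 2"
    using assms S0 unfolding S_def f_def by (intro mult_mono) auto
  moreover have "(1-e)^2 - (1-e)*S + cmod (det v)^2 = f - e*(2-S) + e^2"
    by (simp add: f_def algebra_simps power2_eq_square)
  ultimately have "0 \<le> (1-e)^2 - (1-e)*S + cmod (det v)^2"
    using zero_le_power2[of e] by linarith
  moreover have "S \<le> 2*(1-e)" using e_le by simp
  ultimately have "\<forall>x. norm (v *v x)^2 \<le> (1-e) * norm x^2"
    unfolding matrix_bound_2_iff S_def by blast
  then have "opnorm v \<le> sqrt (1-e)"
    using e by (simp add: opnorm_le_sqrt_iff)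
  also have "\<dots> < 1" using e by simp
  finally show ?thesis .
qed

lemma mem_interior_tetrablockI:
  fixes z1 z2 z3 :: complex
  defines "s \<equiv> cmod z1^2 + cmod z2^2 + 2 * cmod (z1*z2 - z3)"
  assumes "s < 2" and "0 < 1 - s + cmod z3^2"
  shows "(z1, z2, z3) \<in> interior tetrablock"
proof -
  \<comment> \<open>\<open>lift_hs z\<close> is the squared Hilbert-Schmidt norm of the symmetric lift of \<open>z\<close> built below\<close>
  define lift_hs where
    "lift_hs z = cmod (fst z)^2 + cmod (fst (snd z))^2 + 2 * cmod (fst z * fst (snd z) - snd (snd z))"
    for z :: "complex \<times> complex \<times> complex"
  define U where "U = {z. lift_hs z < 2 \<and> 0 < 1 - lift_hs z + cmod (snd (snd z))^2}"
  have "open U"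
    unfolding U_def lift_hs_def Collect_conj_eq
    by (intro open_Int open_Collect_less continuous_intros)
  moreover have "(z1, z2, z3) \<in> U"
    using assms by (simp add: U_def lift_hs_def s_def)
  moreover have "U \<subseteq> tetrablock"
  proof
    fix z assume z: "z \<in> U"
    obtain z1 z2 z3 where z_eq: "z = (z1, z2, z3)" by (cases z) blast
    define w where "w = csqrt (z1*z2 - z3)"
    define lift :: "complex^2^2" where "lift = vector [vector [z1, w], vector [w, z2]]"
    have "w * w = z1*z2 - z3"
      using power2_csqrt[of "z1*z2 - z3"] by (simp add: w_def power2_eq_square)
    have "hs_norm_sq lift = lift_hs z"
      by (simp add: hs_norm_sq_2 lift_def w_def lift_hs_def z_eq)
    moreover have "det lift = z3"
      unfolding det_2 by (simp add: lift_def \<open>w * w = z1*z2 - z3\<close>)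
    ultimately have "lift \<in> R_I"
      using z opnorm_lt_1I[of lift] by (simp add: R_I_def U_def z_eq)
    moreover have "tb_pi lift = z"
      unfolding tb_pi_def \<open>det lift = z3\<close> by (simp add: lift_def z_eq)
    ultimately show "z \<in> tetrablock" unfolding tetrablock_def by (metis image_eqI)
  qed
  ultimately show ?thesis by (meson interior_maximal subsetD)
qed

theorem lemma9:
  fixes v :: "complex^2^2"
  assumes "opnorm v = 1"
    and "tb_pi v \<in> frontier tetrablock"
  shows "cmod (v $ 1 $ 2) = cmod (v $ 2 $ 1)"
proof (rule ccontr)
  assume "cmod (v $ 1 $ 2) \<noteq> cmod (v $ 2 $ 1)"
  then have "0 < (cmod (v$1$2) - cmod (v$2$1))^2" by simp
  then have amgm: "2 * cmod (v$1$2 * v$2$1) < cmod (v$1$2)^2 + cmod (v$2$1)^2"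
    by (simp add: norm_mult power2_eq_square algebra_simps)
  have "hs_norm_sq v \<le> 2" and "0 \<le> 1 - hs_norm_sq v + cmod (det v)^2"
    using assms(1) opnorm_le_1_iff[of v] by simp_all
  then have "tb_pi v \<in> interior tetrablock"
    using amgm unfolding tb_pi_def
    by (intro mem_interior_tetrablockI) (simp_all add: hs_norm_sq_2 det_2)
  with assms(2) show False by (simp add: frontier_def)
qed

end
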